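(* Let $m\in\mathbb{N}_+$, $\alpha=(\alpha_1,\dots,\alpha_m)\in(0,1)^m$ and $0<K<\infty$. Let $q\in\mathbb{N}_+$ and $l\in[1,\infty)$ with $q\le l$, and suppose there are $(p_1,\dots,p_m)\in\{1,\dots,q-1\}^m$ such that $|q\alpha_i-p_i|<K/l$ for all $i$, and $\mathbb{Z}/q\mathbb{Z}$ admits an isomorphism $\mathbb{Z}/q\mathbb{Z}\cong\bigoplus_{i=1}^m\mathbb{Z}/l_i\mathbb{Z}$ under which the image of $p_i$ is a generator of the summand $\mathbb{Z}/l_i\mathbb{Z}$, for each $i$. Then, for the action $\mathbb{Z}^m\curvearrowright_\alpha\mathbb{T}^1$, the level $(ql\,\mathbb{T}^1,d_{\mathbb{Z}^m})$ of the warped cone is quasi-isometric to $(\mathbb{T}^1,ld)\times\prod_{i=1}^m(\mathbb{T}^1,l_id)$ (with the $\ell_1$-product metric), with quasi-isometry constants depending only on $m$ and $K$.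
   Context: $\mathbb{T}^1=\mathbb{R}/\mathbb{Z}$ with standard metric $d$ of circumference $1$; $(\mathbb{T}^1,cd)$ is this circle with metric scaled by $c$. The action $\mathbb{Z}^m\curvearrowright_\alpha\mathbb{T}^1$ is $(n_1,\dots,n_m).z=z+\sum_in_i\alpha_i$, with generating set $\{\pm e_1,\dots,\pm e_m\}$ of $\mathbb{Z}^m$. For $t>0$, $d_{\mathbb{Z}^m}$ on $t\mathbb{T}^1$ is the largest metric with $d_{\mathbb{Z}^m}(z,z')\le td(z,z')$ and $d_{\mathbb{Z}^m}(z,z\pm\alpha_j)\le1$ for all $j$. A $(C,A)$-quasi-isometry $f:X\to Y$ satisfies $C^{-1}d(x,x')-A\le d(f(x),f(x'))\le Cd(x,x')+A$ and the $A$-neighbourhood of $f(X)$ is $Y$. *)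

theory Defs
  imports "HOL-Analysis.Analysis" "HOL-Algebra.Product_Groups"
begin

text \<open>The circle T^1 = R/Z, represented by the carrier [0,1) of reals.\<close>
definition T1 :: "real set" where
  "T1 = {0..<1}"

definition circ_dist :: "real \<Rightarrow> real \<Rightarrow> real" where
  "circ_dist x y = \<bar>(x - y) - of_int (round (x - y))\<bar>"

definition rot :: "real \<Rightarrow> real \<Rightarrow> real" where
  "rot a z = frac (z + a)"

text \<open>The metric d_{Z^m} on the level t T^1 of the warped cone of the action
  Z^m acting on T^1 by alpha (generating set {+-e_1,...,+-e_m}):
  the largest metric delta with delta(z,z') \<le> t d(z,z') and
  delta(z, z \<plusminus> alpha_j) \<le> 1 for all j.\<close>
definition warped_level_dist :: "nat \<Rightarrow> (nat \<Rightarrow> real) \<Rightarrow> real \<Rightarrow> real \<Rightarrow> real \<Rightarrow> real" where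
  "warped_level_dist m \<alpha> t z z' =
     Sup {\<delta> z z' | \<delta>. Metric_space T1 \<delta>
        \<and> (\<forall>x\<in>T1. \<forall>y\<in>T1. \<delta> x y \<le> t * circ_dist x y)
        \<and> (\<forall>x\<in>T1. \<forall>j<m. \<delta> x (rot (\<alpha> j) x) \<le> 1 \<and> \<delta> x (rot (- \<alpha> j) x) \<le> 1)}"

definition quasi_isometry ::
  "real \<Rightarrow> real \<Rightarrow> 'a set \<Rightarrow> ('a \<Rightarrow> 'a \<Rightarrow> real) \<Rightarrow> 'b set \<Rightarrow> ('b \<Rightarrow> 'b \<Rightarrow> real) \<Rightarrow> ('a \<Rightarrow> 'b) \<Rightarrow> bool" where
  "quasi_isometry C A X dX Y dY f \<longleftrightarrow>
     f ` X \<subseteq> Y \<and>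
     (\<forall>x\<in>X. \<forall>x'\<in>X. dX x x' / C - A \<le> dY (f x) (f x') \<and> dY (f x) (f x') \<le> C * dX x x' + A) \<and>
     (\<forall>y\<in>Y. \<exists>x\<in>X. dY y (f x) \<le> A)"

definition prod_carrier :: "nat \<Rightarrow> (real \<times> (nat \<Rightarrow> real)) set" where
  "prod_carrier m = T1 \<times> (\<Pi>\<^sub>E i\<in>{..<m}. T1)"

definition l1_prod_dist :: "nat \<Rightarrow> real \<Rightarrow> (nat \<Rightarrow> nat) \<Rightarrow>
    real \<times> (nat \<Rightarrow> real) \<Rightarrow> real \<times> (nat \<Rightarrow> real) \<Rightarrow> real" where
  "l1_prod_dist m l ls u v =
     l * circ_dist (fst u) (fst v) + (\<Sum>i<m. real (ls i) * circ_dist (snd u i) (snd v i))"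

definition summand :: "nat \<Rightarrow> (nat \<Rightarrow> nat) \<Rightarrow> nat \<Rightarrow> (nat \<Rightarrow> int) set" where
  "summand m ls i = {x \<in> carrier (sum_group {..<m} (\<lambda>j. integer_mod_group (ls j))).
                       \<forall>j\<in>{..<m}. j \<noteq> i \<longrightarrow> x j = 0}"

end

theory Submission
  imports Defs "HOL-Number_Theory.Cong"
begin

(* Write the isomorphism Z/q = (+)_i Z/l_i as x |-> (x w_i mod l_i)_i, normalised so that
   p_j w_i = delta_ij (mod l_i), and put n_i = (q/l_i) w_i.  The map z |-> (q z, n_1 z, ..., n_m z)
   mod 1 pulls the l1-product metric back to N(x - y), where N r = l ||q r|| + sum_i l_i ||n_i r||,
   and its image is m-dense because x |-> (x w_i mod l_i)_i is onto.
   Since q alpha_j is within K/l of p_j, each generator moves N by O(K), so N/C + ||.||/2 is an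
   admissible metric on the level and N <= C d.  Conversely, put k = round (q (y - x)) and let
   g_i be the residue of k w_i mod l_i closest to 0; the duality forces sum_j g_j p_j = k (mod q),
   so rotating x by sum_j g_j alpha_j lands near y, and both the word length sum |g_j| and the
   remaining distance are O(N(y - x)). *)

definition circ_norm :: "real \<Rightarrow> real" where
  "circ_norm r = \<bar>r - of_int (round r)\<bar>"

lemma circ_dist_eq_circ_norm: "circ_dist x y = circ_norm (x - y)"
  by (simp add: circ_dist_def circ_norm_def)

lemma circ_norm_le: "circ_norm r \<le> \<bar>r - of_int k\<bar>"
  unfolding circ_norm_def by (rule round_diff_minimal)

lemma circ_norm_nonneg: "0 \<le> circ_norm r"
  by (simp add: circ_norm_def)

lemma circ_norm_le_half: "circ_norm r \<le> 1/2"
  unfolding circ_norm_def by (subst abs_minus_commute) (rule of_int_round_abs_le)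

lemma circ_norm_le_abs: "circ_norm r \<le> \<bar>r\<bar>"
  using circ_norm_le[of r 0] by simp

lemma circ_norm_eq_if_diff_Ints:
  assumes "x - y \<in> \<int>"
  shows "circ_norm x = circ_norm y"
proof -
  from assms obtain k where k: "x - y = of_int k" by (metis Ints_cases)
  have "circ_norm x \<le> circ_norm y"
    using circ_norm_le[of x "round y + k"] k unfolding circ_norm_def by (simp add: algebra_simps)
  moreover have "circ_norm y \<le> circ_norm x"
    using circ_norm_le[of y "round x - k"] k unfolding circ_norm_def by (simp add: algebra_simps)
  ultimately show ?thesis by simp
qed

lemma circ_norm_minus [simp]: "circ_norm (- r) = circ_norm r"
proof -
  have "circ_norm (- r) \<le> circ_norm r" for r
    using circ_norm_le[of "- r" "- round r"] unfolding circ_norm_def by linarith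
  from this[of r] this[of "- r"] show ?thesis by simp
qed

lemma circ_norm_minus_commute: "circ_norm (x - y) = circ_norm (y - x)"
  by (metis circ_norm_minus minus_diff_eq)

lemma circ_norm_triangle: "circ_norm (a + b) \<le> circ_norm a + circ_norm b"
proof -
  have "circ_norm (a + b) \<le> \<bar>(a + b) - of_int (round a + round b)\<bar>" by (rule circ_norm_le)
  also have "\<dots> \<le> \<bar>a - of_int (round a)\<bar> + \<bar>b - of_int (round b)\<bar>" by simp
  finally show ?thesis by (simp add: circ_norm_def)
qed

lemma circ_norm_triangle_diff: "circ_norm (a - b) \<le> circ_norm a + circ_norm b"
  using circ_norm_triangle[of a "- b"] by simp

lemma circ_norm_mult_of_int: "circ_norm (of_int n * r) \<le> \<bar>of_int n\<bar> * circ_norm r"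
proof -
  have "circ_norm (of_int n * r) \<le> \<bar>of_int n * r - of_int (n * round r)\<bar>" by (rule circ_norm_le)
  also have "\<dots> = \<bar>of_int n\<bar> * circ_norm r"
    by (simp add: circ_norm_def abs_mult[symmetric] algebra_simps)
  finally show ?thesis .
qed

lemma circ_norm_mult_le_abs:
  assumes "0 \<le> c" and "c \<le> 1"
  shows "circ_norm (c * s) \<le> \<bar>s\<bar>"
proof -
  have "\<bar>c * s\<bar> \<le> \<bar>s\<bar>"
    using assms by (simp add: abs_mult mult_left_le_one_le)
  then show ?thesis using circ_norm_le_abs order_trans by blast
qed

lemma circ_norm_eq_0_iff: "circ_norm r = 0 \<longleftrightarrow> r \<in> \<int>"
  unfolding circ_norm_def by (metis Ints_cases Ints_of_int abs_eq_0 eq_iff_diff_eq_0 round_of_int)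

lemma circ_dist_frac_frac: "circ_dist (frac x) (frac y) = circ_norm (x - y)"
  unfolding circ_dist_eq_circ_norm by (rule circ_norm_eq_if_diff_Ints) (simp add: frac_def)

lemma frac_in_T1: "frac x \<in> T1"
  by (simp add: T1_def frac_lt_1)

lemma frac_frac_add: "frac (frac y + a) = frac (y + a)"
  by (metis add.commute frac_add_simps(1) frac_def diff_add_eq frac_add_of_int_right add_diff_eq)

definition warped_admissible ::
    "nat \<Rightarrow> (nat \<Rightarrow> real) \<Rightarrow> real \<Rightarrow> (real \<Rightarrow> real \<Rightarrow> real) \<Rightarrow> bool" where
  "warped_admissible m \<alpha> t \<delta> \<longleftrightarrow> Metric_space T1 \<delta>
     \<and> (\<forall>x\<in>T1. \<forall>y\<in>T1. \<delta> x y \<le> t * circ_dist x y)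
     \<and> (\<forall>x\<in>T1. \<forall>j<m. \<delta> x (rot (\<alpha> j) x) \<le> 1 \<and> \<delta> x (rot (- \<alpha> j) x) \<le> 1)"

lemma warped_level_dist_eq_Sup:
  "warped_level_dist m \<alpha> t x y = Sup {\<delta> x y | \<delta>. warped_admissible m \<alpha> t \<delta>}"
  unfolding warped_level_dist_def warped_admissible_def ..

lemma rotation_power_dist_le:
  assumes "Metric_space T1 \<delta>" and step: "\<forall>x\<in>T1. \<delta> x (frac (x + b)) \<le> 1" and x: "x \<in> T1"
  shows "\<delta> x (frac (x + of_nat N * b)) \<le> of_nat N"
proof (induction N)
  case 0
  have "frac x = x" using x by (simp add: T1_def frac_eq)
  then show ?case using Metric_space.zero[OF assms(1) x x] by simp
next
  case (Suc N)
  let ?y = "frac (x + of_nat N * b)"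
  have "\<delta> x (frac (?y + b)) \<le> \<delta> x ?y + \<delta> ?y (frac (?y + b))"
    using Metric_space.triangle[OF assms(1) x frac_in_T1 frac_in_T1] .
  also have "\<dots> \<le> of_nat N + 1"
    using Suc.IH step[rule_format, OF frac_in_T1] by (rule add_mono)
  finally show ?case by (simp add: frac_frac_add algebra_simps)
qed

lemma rotation_int_power_dist_le:
  assumes "Metric_space T1 \<delta>"
    and "\<forall>x\<in>T1. \<delta> x (frac (x + a)) \<le> 1" and "\<forall>x\<in>T1. \<delta> x (frac (x + - a)) \<le> 1"
    and "x \<in> T1"
  shows "\<delta> x (frac (x + of_int k * a)) \<le> \<bar>of_int k\<bar>"
proof (cases "k \<ge> 0")
  case True
  then show ?thesis
    using rotation_power_dist_le[OF assms(1,2,4), of "nat k"] by simp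
next
  case False
  then show ?thesis
    using rotation_power_dist_le[OF assms(1,3,4), of "nat (- k)"] by simp
qed

lemma admissible_word_dist_le:
  assumes adm: "warped_admissible m \<alpha> t \<delta>" and x: "x \<in> T1" and "n \<le> m"
  shows "\<delta> x (frac (x + (\<Sum>j<n. of_int (g j) * \<alpha> j))) \<le> (\<Sum>j<n. \<bar>of_int (g j)\<bar>)"
  using \<open>n \<le> m\<close>
proof (induction n)
  case 0
  have "frac x = x" using x by (simp add: T1_def frac_eq)
  moreover have "\<delta> x x = 0"
    using adm Metric_space.zero[OF _ x x] by (simp add: warped_admissible_def)
  ultimately show ?case by simp
next
  case (Suc n)
  have ms: "Metric_space T1 \<delta>" using adm by (simp add: warped_admissible_def)
  let ?y = "frac (x + (\<Sum>j<n. of_int (g j) * \<alpha> j))"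
  have gen: "\<forall>x\<in>T1. \<delta> x (frac (x + \<alpha> n)) \<le> 1" "\<forall>x\<in>T1. \<delta> x (frac (x + - \<alpha> n)) \<le> 1"
    using adm Suc.prems by (auto simp: warped_admissible_def rot_def)
  have "\<delta> x (frac (?y + of_int (g n) * \<alpha> n)) \<le> \<delta> x ?y + \<delta> ?y (frac (?y + of_int (g n) * \<alpha> n))"
    using Metric_space.triangle[OF ms x frac_in_T1 frac_in_T1] .
  also have "\<dots> \<le> (\<Sum>j<n. \<bar>of_int (g j)\<bar>) + \<bar>of_int (g n)\<bar>"
    using Suc rotation_int_power_dist_le[OF ms gen frac_in_T1] by (intro add_mono) auto
  finally show ?case by (simp add: frac_frac_add algebra_simps)
qed

lemma admissible_le_word:
  assumes adm: "warped_admissible m \<alpha> t \<delta>" and x: "x \<in> T1" and y: "y \<in> T1"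
  shows "\<delta> x y \<le> (\<Sum>j<m. \<bar>of_int (g j)\<bar>) + t * circ_norm (x + (\<Sum>j<m. of_int (g j) * \<alpha> j) - y)"
proof -
  have ms: "Metric_space T1 \<delta>" using adm by (simp add: warped_admissible_def)
  let ?z = "frac (x + (\<Sum>j<m. of_int (g j) * \<alpha> j))"
  have "circ_dist ?z y = circ_norm (x + (\<Sum>j<m. of_int (g j) * \<alpha> j) - y)"
    unfolding circ_dist_eq_circ_norm by (rule circ_norm_eq_if_diff_Ints) (simp add: frac_def)
  moreover have "\<delta> ?z y \<le> t * circ_dist ?z y"
    using adm frac_in_T1 y unfolding warped_admissible_def by blast
  ultimately have "\<delta> ?z y \<le> t * circ_norm (x + (\<Sum>j<m. of_int (g j) * \<alpha> j) - y)"
    by simp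
  moreover have "\<delta> x y \<le> \<delta> x ?z + \<delta> ?z y"
    using Metric_space.triangle[OF ms x frac_in_T1 y] .
  ultimately show ?thesis
    using admissible_word_dist_le[OF adm x order.refl, of g] by linarith
qed

lemma warped_level_dist_le_word:
  assumes "warped_admissible m \<alpha> t \<delta>" and "x \<in> T1" and "y \<in> T1"
  shows "warped_level_dist m \<alpha> t x y
    \<le> (\<Sum>j<m. \<bar>of_int (g j)\<bar>) + t * circ_norm (x + (\<Sum>j<m. of_int (g j) * \<alpha> j) - y)"
  unfolding warped_level_dist_eq_Sup
  using assms by (intro cSup_least) (auto intro: admissible_le_word)

lemma admissible_le_warped_level_dist:
  assumes "warped_admissible m \<alpha> t \<delta>" and "x \<in> T1" and "y \<in> T1"
  shows "\<delta> x y \<le> warped_level_dist m \<alpha> t x y"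
proof -
  have "bdd_above {\<delta> x y | \<delta>. warped_admissible m \<alpha> t \<delta>}"
    using assms(2,3) unfolding bdd_above_def warped_admissible_def by blast
  then show ?thesis
    unfolding warped_level_dist_eq_Sup using assms(1) by (auto intro: cSup_upper)
qed

lemma abs_minus_round_div:
  assumes "L > 0"
  shows "\<bar>of_int (a - int L * round (of_int a / real L))\<bar> = real L * circ_norm (of_int a / real L)"
proof -
  have "real L * circ_norm (of_int a / real L)
      = \<bar>real L * (of_int a / real L - of_int (round (of_int a / real L)))\<bar>"
    by (simp add: circ_norm_def abs_mult)
  also have "\<dots> = \<bar>of_int (a - int L * round (of_int a / real L))\<bar>"
    using assms by (simp add: algebra_simps)
  finally show ?thesis ..
qed

locale cyclic_decomposition =
  fixes m q :: nat and ls :: "nat \<Rightarrow> nat" and p w :: "nat \<Rightarrow> int"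
  assumes q_pos: "q \<ge> 1"
    and ls_pos: "i < m \<Longrightarrow> ls i \<ge> 1"
    and ls_dvd_q: "i < m \<Longrightarrow> ls i dvd q"
    and w_range: "i < m \<Longrightarrow> 0 \<le> w i \<and> w i < int (ls i)"
    and kernel: "\<forall>i<m. [x * w i = 0] (mod int (ls i)) \<Longrightarrow> int q dvd x"
    and surjective: "\<exists>x. \<forall>i<m. [x * w i = y i] (mod int (ls i))"
    and dual_basis: "i < m \<Longrightarrow> j < m \<Longrightarrow> [p j * w i = (if i = j then 1 else 0)] (mod int (ls i))"
begin

definition freq :: "nat \<Rightarrow> int" where
  "freq i = int (q div ls i) * w i"

definition embed :: "real \<Rightarrow> real \<times> (nat \<Rightarrow> real)" where
  "embed z = (frac (real q * z), \<lambda>i\<in>{..<m}. frac (of_int (freq i) * z))"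

lemma ls_le_q: "i < m \<Longrightarrow> ls i \<le> q"
  using ls_dvd_q q_pos by (simp add: dvd_imp_le)

lemma freq_div_q: "i < m \<Longrightarrow> of_int (freq i) / real q = of_int (w i) / real (ls i)"
  using ls_dvd_q[of i] ls_pos[of i] q_pos by (auto simp: freq_def real_of_nat_div field_simps)

lemma freq_range: "i < m \<Longrightarrow> 0 \<le> freq i \<and> freq i < int q"
proof -
  assume i: "i < m"
  have "of_int (freq i) / real q < 1"
    using freq_div_q[OF i] w_range[OF i] ls_pos[OF i] by simp
  then have "real_of_int (freq i) < real_of_int (int q)"
    using q_pos by (simp add: divide_less_eq)
  then show ?thesis using w_range[OF i] unfolding of_int_less_iff by (simp add: freq_def)
qed

lemma circ_norm_freq_div_q_mult_le: "i < m \<Longrightarrow> circ_norm (of_int (freq i) / real q * s) \<le> \<bar>s\<bar>"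
  using freq_range[of i] q_pos by (intro circ_norm_mult_le_abs) auto

lemma symmetric_residue_bound:
  fixes r :: real
  defines "k \<equiv> round (real q * r)"
  assumes i: "i < m"
  shows "\<bar>of_int (k * w i - int (ls i) * round (of_int (k * w i) / real (ls i)))\<bar>
    \<le> real (ls i) * (circ_norm (of_int (freq i) * r) + circ_norm (real q * r))"
proof -
  define s where "s = real q * r - of_int k"
  have s_abs: "\<bar>s\<bar> = circ_norm (real q * r)"
    unfolding s_def k_def circ_norm_def ..
  have q0: "real q > 0" using q_pos by simp
  have split: "of_int (k * w i) / real (ls i) = of_int (freq i) * r - of_int (freq i) / real q * s"
      using freq_div_q[OF i] ls_pos[OF i] q0 by (simp add: s_def field_simps)
  from circ_norm_freq_div_q_mult_le[OF i, of s]
  have "circ_norm (of_int (k * w i) / real (ls i)) \<le> circ_norm (of_int (freq i) * r) + \<bar>s\<bar>"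
    unfolding split using circ_norm_triangle_diff order_trans add_left_mono by blast
  then show ?thesis
    using ls_pos[OF i] abs_minus_round_div[of "ls i" "k * w i"]
    by (simp add: s_abs mult_left_mono)
qed

lemma word_congruence:
  assumes "\<forall>i<m. [g i = k * w i] (mod int (ls i))"
  shows "int q dvd (\<Sum>j<m. g j * p j) - k"
proof (rule kernel, intro allI impI)
  fix i assume i: "i < m"
  have "[(\<Sum>j<m. g j * p j) * w i = (\<Sum>j<m. g j * (if i = j then 1 else 0))] (mod int (ls i))"
    unfolding sum_distrib_right mult.assoc
    using dual_basis[OF i] by (intro cong_sum cong_scalar_left) simp
  also have "(\<Sum>j<m. g j * (if i = j then 1 else 0)) = g i"
    using i by (simp add: if_distrib[of "\<lambda>t. g _ * t"] cong: if_cong)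
  finally have "[((\<Sum>j<m. g j * p j) - k) * w i = g i - k * w i] (mod int (ls i))"
    unfolding left_diff_distrib by (rule cong_diff) simp
  also have "[g i - k * w i = 0] (mod int (ls i))"
    using assms i by (simp add: cong_iff_dvd_diff)
  finally show "[((\<Sum>j<m. g j * p j) - k) * w i = 0] (mod int (ls i))" .
qed

lemma embed_in_prod_carrier: "embed z \<in> prod_carrier m"
  by (simp add: embed_def prod_carrier_def frac_in_T1)

lemma embed_coarsely_onto:
  assumes "u \<in> prod_carrier m"
  shows "\<exists>z\<in>T1. l1_prod_dist m l ls u (embed z) \<le> real m"
proof -
  obtain y0 Y where u: "u = (y0, Y)" by (cases u)
  have q0: "real q > 0" using q_pos by simp
  define v where "v i = Y i - of_int (freq i) * y0 / real q" for i
  obtain x where x: "\<forall>i<m. [x * w i = round (real (ls i) * v i)] (mod int (ls i))"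
    using surjective[of "\<lambda>i. round (real (ls i) * v i)"] by blast
  define a where "a = (of_int x + y0) / real q"
  define z where "z = frac a"
  have "real q * z = of_int x + y0 - real q * of_int \<lfloor>a\<rfloor>"
    using q0 by (simp add: z_def a_def frac_def right_diff_distrib)
  then have "y0 - frac (real q * z) = of_int (int q * \<lfloor>a\<rfloor> - x + \<lfloor>real q * z\<rfloor>)"
    by (simp add: frac_def)
  then have first: "circ_dist y0 (frac (real q * z)) = 0"
    unfolding circ_dist_eq_circ_norm by (simp add: circ_norm_eq_0_iff)
  have coord: "real (ls i) * circ_dist (Y i) (frac (of_int (freq i) * z)) \<le> 1" if i: "i < m" for i
  proof -
    have l0: "real (ls i) > 0" using ls_pos[OF i] by simp
    define R where "R = round (real (ls i) * v i)"
    have "int (ls i) dvd x * w i - R"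
      using x i by (simp add: R_def cong_iff_dvd_diff)
    then obtain h where h: "x * w i - R = int (ls i) * h" by (rule dvdE)
    have "of_int (freq i) * a = of_int x * (of_int (freq i) / real q) + of_int (freq i) * y0 / real q"
      by (simp add: a_def algebra_simps add_divide_distrib)
    also have "of_int x * (of_int (freq i) / real q) = of_int R / real (ls i) + of_int h"
    proof -
      have "real_of_int (x * w i) = of_int R + real (ls i) * of_int h"
        using arg_cong[OF h, of real_of_int] by simp
      then show ?thesis
        using freq_div_q[OF i] l0 by (simp add: add_divide_distrib)
    qed
    finally have "(Y i - frac (of_int (freq i) * z)) - (v i - of_int R / real (ls i))
        = of_int (\<lfloor>of_int (freq i) * z\<rfloor> + freq i * \<lfloor>a\<rfloor> - h)"
      by (simp add: z_def frac_def v_def right_diff_distrib)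
    then have "circ_dist (Y i) (frac (of_int (freq i) * z)) = circ_norm (v i - of_int R / real (ls i))"
      unfolding circ_dist_eq_circ_norm by (intro circ_norm_eq_if_diff_Ints) simp
    also have "\<dots> \<le> \<bar>v i - of_int R / real (ls i)\<bar>" by (rule circ_norm_le_abs)
    finally have "real (ls i) * circ_dist (Y i) (frac (of_int (freq i) * z))
        \<le> real (ls i) * \<bar>v i - of_int R / real (ls i)\<bar>"
      using l0 by (simp add: mult_left_mono)
    also have "\<dots> = \<bar>real (ls i) * (v i - of_int R / real (ls i))\<bar>"
      using l0 by (simp add: abs_mult)
    also have "\<dots> = \<bar>real (ls i) * v i - of_int R\<bar>"
      using l0 by (simp add: right_diff_distrib)
    also have "\<dots> \<le> 1/2"
      using circ_norm_le_half[of "real (ls i) * v i"] by (simp add: R_def circ_norm_def)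
    finally show ?thesis by simp
  qed
  have "l1_prod_dist m l ls u (embed z) = (\<Sum>i<m. real (ls i) * circ_dist (Y i) (frac (of_int (freq i) * z)))"
    by (simp add: l1_prod_dist_def u embed_def first)
  also have "\<dots> \<le> (\<Sum>i<m. 1)"
    by (rule sum_mono) (simp add: coord)
  finally show ?thesis using frac_in_T1 unfolding z_def by auto
qed

end

locale warped_level_data = cyclic_decomposition +
  fixes l K :: real and \<alpha> :: "nat \<Rightarrow> real"
  assumes q_le_l: "real q \<le> l"
    and K_nonneg: "0 \<le> K"
    and approx: "j < m \<Longrightarrow> \<bar>real q * \<alpha> j - of_int (p j)\<bar> < K / l"
begin

definition embed_norm :: "real \<Rightarrow> real" where
  "embed_norm r = l * circ_norm (real q * r) + (\<Sum>i<m. real (ls i) * circ_norm (of_int (freq i) * r))"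

lemma l_ge_1: "l \<ge> 1"
  using q_le_l q_pos by linarith

lemma approx_le: "j < m \<Longrightarrow> l * \<bar>real q * \<alpha> j - of_int (p j)\<bar> \<le> K"
  using approx[of j] l_ge_1 by (simp add: pos_less_divide_eq mult.commute less_imp_le)

lemma ls_le_l: "i < m \<Longrightarrow> real (ls i) \<le> l"
  using ls_le_q q_le_l by (meson of_nat_le_iff order_trans)

lemma l1_prod_dist_embed: "l1_prod_dist m l ls (embed x) (embed y) = embed_norm (x - y)"
  by (simp add: l1_prod_dist_def embed_def embed_norm_def circ_dist_frac_frac right_diff_distrib)

lemma embed_norm_nonneg: "0 \<le> embed_norm r"
  using l_ge_1 by (simp add: embed_norm_def circ_norm_nonneg sum_nonneg)

lemma embed_norm_minus: "embed_norm (- r) = embed_norm r"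
  using circ_norm_minus[of "real q * r"] circ_norm_minus[of "of_int (freq _) * r"]
  by (simp add: embed_norm_def)

lemma embed_norm_zero: "embed_norm 0 = 0"
  by (simp add: embed_norm_def circ_norm_def)

lemma embed_norm_triangle: "embed_norm (a + b) \<le> embed_norm a + embed_norm b"
proof -
  have mono: "c * circ_norm (t * (a + b)) \<le> c * circ_norm (t * a) + c * circ_norm (t * b)"
    if "c \<ge> 0" for c t :: real
    using mult_left_mono[OF circ_norm_triangle[of "t * a" "t * b"] that]
    by (simp add: distrib_left)
  have "(\<Sum>i<m. real (ls i) * circ_norm (of_int (freq i) * (a + b)))
      \<le> (\<Sum>i<m. real (ls i) * circ_norm (of_int (freq i) * a)
                + real (ls i) * circ_norm (of_int (freq i) * b))"
    by (rule sum_mono) (rule mono, simp)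
  moreover have "l * circ_norm (real q * (a + b)) \<le> l * circ_norm (real q * a) + l * circ_norm (real q * b)"
    using l_ge_1 by (intro mono) simp
  ultimately show ?thesis
    unfolding embed_norm_def sum.distrib by linarith
qed

lemma embed_norm_eq_if_diff_Ints: "r - r' \<in> \<int> \<Longrightarrow> embed_norm r = embed_norm r'"
proof -
  assume "r - r' \<in> \<int>"
  then obtain k where k: "r - r' = of_int k" by (elim Ints_cases)
  have "circ_norm (of_int n * r) = circ_norm (of_int n * r')" for n
    by (rule circ_norm_eq_if_diff_Ints) (simp add: k right_diff_distrib[symmetric])
  from this[of "int q"] this[of "freq _"] show ?thesis
    by (simp add: embed_norm_def)
qed

lemma embed_norm_le_circ_norm: "embed_norm r \<le> real (Suc m) * (real q * l) * circ_norm r"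
proof -
  have "l * circ_norm (real q * r) \<le> real q * l * circ_norm r"
    using mult_left_mono[OF circ_norm_mult_of_int[of "int q" r], of l] l_ge_1 by simp
  moreover have "real (ls i) * circ_norm (of_int (freq i) * r) \<le> real q * l * circ_norm r"
    if i: "i < m" for i
  proof -
    have "\<bar>real_of_int (freq i)\<bar> \<le> real q"
      using freq_range[OF i] by simp
    then have "circ_norm (of_int (freq i) * r) \<le> real q * circ_norm r"
      using circ_norm_mult_of_int[of "freq i" r] circ_norm_nonneg[of r]
      by (meson mult_right_mono order_trans)
    then have "real (ls i) * circ_norm (of_int (freq i) * r) \<le> l * (real q * circ_norm r)"
      using ls_le_l[OF i] l_ge_1 circ_norm_nonneg by (intro mult_mono) auto
    then show ?thesis by (simp add: algebra_simps)
  qed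
  ultimately have "embed_norm r \<le> real q * l * circ_norm r + (\<Sum>i<m. real q * l * circ_norm r)"
    unfolding embed_norm_def by (intro add_mono sum_mono) auto
  then show ?thesis by (simp add: algebra_simps)
qed

lemma embed_norm_generator:
  assumes j: "j < m"
  shows "embed_norm (\<alpha> j) \<le> real (Suc m) * K + 1"
proof -
  let ?e = "real q * \<alpha> j - of_int (p j)"
  have q0: "real q > 0" using q_pos by simp
  have first: "l * circ_norm (real q * \<alpha> j) \<le> K"
  proof -
    have "circ_norm (real q * \<alpha> j) = circ_norm ?e"
      by (rule circ_norm_eq_if_diff_Ints) simp
    then have "l * circ_norm (real q * \<alpha> j) \<le> l * \<bar>?e\<bar>"
      using circ_norm_le_abs[of ?e] l_ge_1 by (simp add: mult_left_mono)
    then show ?thesis using approx_le[OF j] by simp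
  qed
  have coord: "real (ls i) * circ_norm (of_int (freq i) * \<alpha> j) \<le> K + (if i = j then 1 else 0)"
    if i: "i < m" for i
  proof -
    have l0: "real (ls i) > 0" using ls_pos[OF i] by simp
    have split: "of_int (freq i) * \<alpha> j
        = of_int (freq i) / real q * ?e + of_int (p j * w i) / real (ls i)"
      using freq_div_q[OF i] q0 l0 by (simp add: field_simps)
    have "circ_norm (of_int (freq i) / real q * ?e) \<le> \<bar>?e\<bar>"
      using circ_norm_freq_div_q_mult_le[OF i] .
    moreover have "circ_norm (of_int (p j * w i) / real (ls i))
        = circ_norm ((if i = j then 1 else 0) / real (ls i))"
    proof (rule circ_norm_eq_if_diff_Ints)
      have "int (ls i) dvd p j * w i - (if i = j then 1 else 0)"
        using dual_basis[OF i j] by (simp add: cong_iff_dvd_diff)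
      then obtain h where h: "p j * w i - (if i = j then 1 else 0) = int (ls i) * h" by (rule dvdE)
      have "of_int (p j * w i) / real (ls i) - (if i = j then 1 else 0) / real (ls i)
          = of_int (p j * w i - (if i = j then 1 else 0)) / real (ls i)"
        by (simp add: diff_divide_distrib)
      also have "\<dots> = of_int h" unfolding h using l0 by simp
      finally show "of_int (p j * w i) / real (ls i) - (if i = j then 1 else 0) / real (ls i) \<in> \<int>"
        by simp
    qed
    ultimately have "circ_norm (of_int (freq i) * \<alpha> j) \<le> \<bar>?e\<bar> + (if i = j then 1 else 0) / real (ls i)"
      using circ_norm_triangle[of "of_int (freq i) / real q * ?e" "of_int (p j * w i) / real (ls i)"]
        circ_norm_le_abs[of "(if i = j then 1 else 0) / real (ls i)"]
      unfolding split by simp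
    then have "real (ls i) * circ_norm (of_int (freq i) * \<alpha> j)
        \<le> real (ls i) * (\<bar>?e\<bar> + (if i = j then 1 else 0) / real (ls i))"
      using l0 by (simp add: mult_left_mono)
    also have "\<dots> = real (ls i) * \<bar>?e\<bar> + (if i = j then 1 else 0)"
      using l0 by (simp add: distrib_left)
    also have "\<dots> \<le> l * \<bar>?e\<bar> + (if i = j then 1 else 0)"
      using ls_le_l[OF i] by (simp add: mult_right_mono)
    finally show ?thesis using approx_le[OF j] by simp
  qed
  have "(\<Sum>i<m. real (ls i) * circ_norm (of_int (freq i) * \<alpha> j)) \<le> (\<Sum>i<m. K + (if i = j then 1 else 0))"
    by (rule sum_mono) (simp add: coord)
  also have "\<dots> = real m * K + 1"
    using j by (simp add: sum.distrib)
  finally show ?thesis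
    using first unfolding embed_norm_def by (simp add: algebra_simps)
qed

lemma metric_space_embed_norm_plus:
  assumes "c \<ge> 0"
  shows "Metric_space T1 (\<lambda>x y. c * embed_norm (x - y) + circ_norm (x - y) / 2)"
proof
  fix x y z :: real
  show "0 \<le> c * embed_norm (x - y) + circ_norm (x - y) / 2"
    using assms embed_norm_nonneg circ_norm_nonneg by simp
  show "c * embed_norm (x - y) + circ_norm (x - y) / 2 = c * embed_norm (y - x) + circ_norm (y - x) / 2"
    using embed_norm_minus[of "x - y"] circ_norm_minus_commute[of x y] by simp
  have "embed_norm (x - z) \<le> embed_norm (x - y) + embed_norm (y - z)"
    using embed_norm_triangle[of "x - y" "y - z"] by simp
  from mult_left_mono[OF this assms]
  have "c * embed_norm (x - z) \<le> c * embed_norm (x - y) + c * embed_norm (y - z)"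
    by (simp only: distrib_left)
  moreover have "circ_norm (x - z) \<le> circ_norm (x - y) + circ_norm (y - z)"
    using circ_norm_triangle[of "x - y" "y - z"] by simp
  ultimately show "c * embed_norm (x - z) + circ_norm (x - z) / 2
      \<le> (c * embed_norm (x - y) + circ_norm (x - y) / 2) + (c * embed_norm (y - z) + circ_norm (y - z) / 2)"
    by linarith
next
  fix x y assume "x \<in> T1" "y \<in> T1"
  then have "\<bar>x - y\<bar> < 1" by (auto simp: T1_def)
  then have "x - y \<in> \<int> \<longleftrightarrow> x = y"
    by (auto elim!: Ints_cases simp flip: of_int_abs)
  then show "c * embed_norm (x - y) + circ_norm (x - y) / 2 = 0 \<longleftrightarrow> x = y"
    using assms embed_norm_nonneg[of "x - y"] circ_norm_nonneg[of "x - y"]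
    by (auto simp: embed_norm_zero circ_norm_eq_0_iff[symmetric] add_nonneg_eq_0_iff)
qed

lemma admissible_embed_norm_plus:
  defines "C \<equiv> 2 * real (Suc m) * (K + 1)"
  shows "warped_admissible m \<alpha> (real q * l) (\<lambda>x y. embed_norm (x - y) / C + circ_norm (x - y) / 2)"
proof -
  have C0: "C > 0" using K_nonneg by (simp add: C_def add_pos_nonneg)
  have ql: "real q * l \<ge> 1" using q_pos l_ge_1 mult_mono[of 1 "real q" 1 l] by simp
  have C_eq: "C = real (Suc m) * (2 * (K + 1))"
    unfolding C_def by (simp only: ac_simps)
  have lip: "embed_norm (x - y) / C + circ_norm (x - y) / 2 \<le> real q * l * circ_norm (x - y)" for x y
  proof -
    let ?X = "real q * l * circ_norm (x - y)"
    have X0: "0 \<le> ?X" using ql circ_norm_nonneg[of "x - y"] by simp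
    have "embed_norm (x - y) / C \<le> real (Suc m) * ?X / C"
      using embed_norm_le_circ_norm C0 by (simp add: divide_right_mono mult.assoc)
    also have "\<dots> = ?X / (2 * (K + 1))"
      unfolding C_eq by (simp only: mult_divide_mult_cancel_left_if) simp
    also have "\<dots> \<le> ?X / 2"
      using K_nonneg X0 by (intro divide_left_mono) auto
    finally have "embed_norm (x - y) / C \<le> ?X / 2" .
    moreover have "circ_norm (x - y) \<le> ?X"
      using ql circ_norm_nonneg[of "x - y"] mult_right_mono[of 1 "real q * l" "circ_norm (x - y)"] by simp
    ultimately show ?thesis by linarith
  qed
  have gen: "embed_norm (x - rot a x) / C + circ_norm (x - rot a x) / 2 \<le> 1"
    if "a = \<alpha> j \<or> a = - \<alpha> j" "j < m" for x a j
  proof -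
    have "embed_norm (x - rot a x) = embed_norm (- a)"
      unfolding rot_def by (rule embed_norm_eq_if_diff_Ints) (simp add: frac_def)
    also have "\<dots> = embed_norm (\<alpha> j)"
      using that(1) embed_norm_minus by auto
    also have "\<dots> \<le> C / 2"
      using embed_norm_generator[OF that(2)] K_nonneg by (simp add: C_def algebra_simps)
    finally have "embed_norm (x - rot a x) / C \<le> 1 / 2"
      using C0 by (simp add: divide_le_eq)
    then show ?thesis using circ_norm_le_half[of "x - rot a x"] by simp
  qed
  show ?thesis
    unfolding warped_admissible_def circ_dist_eq_circ_norm
    using metric_space_embed_norm_plus[of "1 / C"] C0 lip by (auto intro!: gen)
qed

lemma word_approximation_bound:
  assumes "int q dvd (\<Sum>j<m. g j * p j) - round (real q * r)"
  shows "real q * l * circ_norm ((\<Sum>j<m. of_int (g j) * \<alpha> j) - r)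
    \<le> K * (\<Sum>j<m. \<bar>of_int (g j)\<bar>) + l * circ_norm (real q * r)"
proof -
  define k where "k = round (real q * r)"
  define s where "s = real q * r - of_int k"
  define E where "E = (\<Sum>j<m. of_int (g j) * (real q * \<alpha> j - of_int (p j))) - s"
  have q0: "real q > 0" using q_pos by simp
  obtain M where M: "(\<Sum>j<m. g j * p j) - k = int q * M"
    using assms unfolding k_def by (elim dvdE)
  have "E = real q * ((\<Sum>j<m. of_int (g j) * \<alpha> j) - r) - of_int ((\<Sum>j<m. g j * p j) - k)"
    by (simp add: E_def s_def algebra_simps sum_subtractf sum_distrib_left)
  then have "(\<Sum>j<m. of_int (g j) * \<alpha> j) - r = E / real q + of_int M"
    using q0 unfolding M by (simp add: field_simps)
  then have "circ_norm ((\<Sum>j<m. of_int (g j) * \<alpha> j) - r) = circ_norm (E / real q)"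
    by (intro circ_norm_eq_if_diff_Ints) simp
  also have "\<dots> \<le> \<bar>E\<bar> / real q"
    using circ_norm_le_abs[of "E / real q"] by simp
  finally have "real q * l * circ_norm ((\<Sum>j<m. of_int (g j) * \<alpha> j) - r) \<le> l * \<bar>E\<bar>"
    using q0 l_ge_1 by (simp add: field_simps mult_left_mono)
  also have "l * \<bar>E\<bar> \<le> (\<Sum>j<m. \<bar>of_int (g j)\<bar> * (l * \<bar>real q * \<alpha> j - of_int (p j)\<bar>)) + l * \<bar>s\<bar>"
  proof -
    have "\<bar>E\<bar> \<le> (\<Sum>j<m. \<bar>of_int (g j)\<bar> * \<bar>real q * \<alpha> j - of_int (p j)\<bar>) + \<bar>s\<bar>"
      unfolding E_def by (rule order_trans[OF abs_triangle_ineq4]) (simp add: sum_abs[THEN order_trans] abs_mult)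
    from mult_left_mono[OF this, of l] show ?thesis
      using l_ge_1 by (simp add: distrib_left sum_distrib_left ac_simps)
  qed
  also have "\<dots> \<le> (\<Sum>j<m. \<bar>of_int (g j)\<bar> * K) + l * \<bar>s\<bar>"
    using approx_le by (intro add_right_mono sum_mono mult_left_mono) auto
  finally show ?thesis
    by (simp add: s_def k_def circ_norm_def sum_distrib_left mult.commute)
qed

lemma exists_short_word:
  "\<exists>g. (\<Sum>j<m. \<bar>of_int (g j)\<bar>) + real q * l * circ_norm ((\<Sum>j<m. of_int (g j) * \<alpha> j) - r)
      \<le> 2 * real (Suc m) * (K + 1) * embed_norm r"
proof -
  define k where "k = round (real q * r)"
  define g where "g i = k * w i - int (ls i) * round (of_int (k * w i) / real (ls i))" for i
  let ?N = "\<Sum>j<m. \<bar>of_int (g j)\<bar>"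
  have first: "l * circ_norm (real q * r) \<le> embed_norm r"
    by (simp add: embed_norm_def sum_nonneg circ_norm_nonneg)
  have "?N \<le> (\<Sum>i<m. real (ls i) * circ_norm (of_int (freq i) * r) + l * circ_norm (real q * r))"
  proof (rule sum_mono)
    fix i assume "i \<in> {..<m}"
    then have i: "i < m" by simp
    have "\<bar>of_int (g i)\<bar> \<le> real (ls i) * circ_norm (of_int (freq i) * r) + real (ls i) * circ_norm (real q * r)"
      using symmetric_residue_bound[OF i, of r] by (simp add: g_def k_def distrib_left)
    also have "\<dots> \<le> real (ls i) * circ_norm (of_int (freq i) * r) + l * circ_norm (real q * r)"
      using ls_le_l[OF i] circ_norm_nonneg by (simp add: mult_right_mono)
    finally show "\<bar>of_int (g i)\<bar> \<le> real (ls i) * circ_norm (of_int (freq i) * r) + l * circ_norm (real q * r)" .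
  qed
  also have "\<dots> = (\<Sum>i<m. real (ls i) * circ_norm (of_int (freq i) * r))
      + real m * (l * circ_norm (real q * r))"
    by (simp add: sum.distrib)
  also have "\<dots> \<le> real (Suc m) * embed_norm r"
    using first mult_left_mono[OF first, of "real m"] l_ge_1 circ_norm_nonneg[of "real q * r"]
    unfolding embed_norm_def by (simp add: algebra_simps)
  finally have N: "?N \<le> real (Suc m) * embed_norm r" .
  have "\<forall>i<m. [g i = k * w i] (mod int (ls i))"
    by (simp add: g_def cong_iff_dvd_diff)
  then have "real q * l * circ_norm ((\<Sum>j<m. of_int (g j) * \<alpha> j) - r) \<le> K * ?N + embed_norm r"
    using word_approximation_bound[OF word_congruence] first unfolding k_def by fastforce
  then have "?N + real q * l * circ_norm ((\<Sum>j<m. of_int (g j) * \<alpha> j) - r)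
      \<le> (K + 1) * real (Suc m) * embed_norm r + embed_norm r"
    using mult_left_mono[OF N, of "K + 1"] K_nonneg by (simp add: algebra_simps)
  also have "\<dots> \<le> 2 * real (Suc m) * (K + 1) * embed_norm r"
    using mult_right_mono[of 1 "(K + 1) * real (Suc m)" "embed_norm r"] K_nonneg embed_norm_nonneg[of r]
    by (simp add: algebra_simps)
  finally show ?thesis by blast
qed

lemma warped_level_dist_le_embed_norm:
  assumes "x \<in> T1" and "y \<in> T1"
  shows "warped_level_dist m \<alpha> (real q * l) x y \<le> 2 * real (Suc m) * (K + 1) * embed_norm (x - y)"
proof -
  obtain g where g: "(\<Sum>j<m. \<bar>of_int (g j)\<bar>) + real q * l * circ_norm ((\<Sum>j<m. of_int (g j) * \<alpha> j) - (y - x))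
      \<le> 2 * real (Suc m) * (K + 1) * embed_norm (y - x)"
    using exists_short_word by blast
  have "embed_norm (y - x) = embed_norm (x - y)"
    using embed_norm_minus[of "x - y"] by simp
  with g show ?thesis
    using warped_level_dist_le_word[OF admissible_embed_norm_plus assms, of g]
    by (simp add: algebra_simps)
qed

lemma embed_norm_le_warped_level_dist:
  assumes "x \<in> T1" and "y \<in> T1"
  shows "embed_norm (x - y) \<le> 2 * real (Suc m) * (K + 1) * warped_level_dist m \<alpha> (real q * l) x y"
proof -
  have C0: "2 * real (Suc m) * (K + 1) > 0" using K_nonneg by (simp add: add_pos_nonneg)
  have "embed_norm (x - y) / (2 * real (Suc m) * (K + 1)) \<le> warped_level_dist m \<alpha> (real q * l) x y"
    using admissible_le_warped_level_dist[OF admissible_embed_norm_plus assms] circ_norm_nonneg[of "x - y"]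
    by simp
  then show ?thesis using C0 by (simp add: divide_le_eq mult.commute)
qed

theorem quasi_isometry_embed:
  "quasi_isometry (2 * real (Suc m) * (K + 1)) (real m) T1 (warped_level_dist m \<alpha> (real q * l))
     (prod_carrier m) (l1_prod_dist m l ls) embed"
  unfolding quasi_isometry_def
proof (intro conjI ballI)
  let ?C = "2 * real (Suc m) * (K + 1)"
  have C0: "?C > 0" using K_nonneg by (simp add: add_pos_nonneg)
  fix x x' assume x: "x \<in> T1" and x': "x' \<in> T1"
  show "warped_level_dist m \<alpha> (real q * l) x x' / ?C - real m \<le> l1_prod_dist m l ls (embed x) (embed x')"
  proof -
    have "warped_level_dist m \<alpha> (real q * l) x x' / ?C \<le> embed_norm (x - x')"
      using warped_level_dist_le_embed_norm[OF x x'] C0 by (simp add: divide_le_eq mult.commute)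
    then show ?thesis unfolding l1_prod_dist_embed by simp
  qed
  show "l1_prod_dist m l ls (embed x) (embed x') \<le> ?C * warped_level_dist m \<alpha> (real q * l) x x' + real m"
    using embed_norm_le_warped_level_dist[OF x x'] by (simp add: l1_prod_dist_embed)
qed (use embed_in_prod_carrier embed_coarsely_onto in auto)

end

lemma projection_hom_sum_group:
  assumes "\<And>j. j \<in> I \<Longrightarrow> group (G j)" and "i \<in> I"
  shows "(\<lambda>x. x i) \<in> hom (sum_group I G) (G i)"
  using assms by (auto simp: hom_def carrier_sum_group PiE_iff)

lemma sum_group_pow_apply:
  assumes "\<And>j. j \<in> I \<Longrightarrow> group (G j)" and "x \<in> carrier (sum_group I G)" and "i \<in> I"
  shows "(x [^]\<^bsub>sum_group I G\<^esub> (n :: nat)) i = x i [^]\<^bsub>G i\<^esub> n"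
    and "(x [^]\<^bsub>sum_group I G\<^esub> (k :: int)) i = x i [^]\<^bsub>G i\<^esub> k"
proof -
  have hom: "(\<lambda>x. x i) \<in> hom (sum_group I G) (G i)"
    using assms(1,3) by (rule projection_hom_sum_group)
  have "group (sum_group I G)" "group (G i)"
    using assms(1,3) by auto
  from hom_nat_pow[OF hom assms(2) this] hom_int_pow[OF hom assms(2) this]
  show "(x [^]\<^bsub>sum_group I G\<^esub> n) i = x i [^]\<^bsub>G i\<^esub> n"
    and "(x [^]\<^bsub>sum_group I G\<^esub> k) i = x i [^]\<^bsub>G i\<^esub> k"
    by simp_all
qed

lemma carrier_sum_integer_mod_group:
  assumes "finite I" and "\<And>i. i \<in> I \<Longrightarrow> ls i \<ge> 1"
  shows "carrier (sum_group I (\<lambda>i. integer_mod_group (ls i))) = (\<Pi>\<^sub>E i\<in>I. {0..<int (ls i)})"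
  using assms by (auto simp: carrier_sum_group carrier_integer_mod_group PiE_iff extensional_def Suc_le_eq)

lemma cong_mult_unit_iff:
  fixes a b u v n :: int
  assumes "[v * u = 1] (mod n)"
  shows "[a * v = b] (mod n) \<longleftrightarrow> [a = b * u] (mod n)"
proof
  assume "[a * v = b] (mod n)"
  have "[a = a * (v * u)] (mod n)"
    using cong_scalar_left[OF assms, of a] by (simp add: cong_sym)
  also have "[a * (v * u) = b * u] (mod n)"
    using cong_scalar_right[OF \<open>[a * v = b] (mod n)\<close>, of u] by (simp add: mult.assoc)
  finally show "[a = b * u] (mod n)" .
next
  assume "[a = b * u] (mod n)"
  have "[a * v = b * (v * u)] (mod n)"
    using cong_scalar_right[OF \<open>[a = b * u] (mod n)\<close>, of v] by (simp add: ac_simps)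
  also have "[b * (v * u) = b] (mod n)"
    using cong_scalar_left[OF assms, of b] by simp
  finally show "[a * v = b] (mod n)" .
qed

lemma summand_generator_unit:
  assumes "i < m" and a: "a \<in> summand m ls i"
    and gen: "generate (sum_group {..<m} (\<lambda>j. integer_mod_group (ls j))) {a} = summand m ls i"
  shows "\<exists>v. [a i * v = 1] (mod int (ls i))"
proof -
  let ?S = "sum_group {..<m} (\<lambda>j. integer_mod_group (ls j))"
  let ?E = "\<lambda>j\<in>{..<m}. if j = i then 1 mod int (ls i) else 0"
  have "?E \<in> carrier ?S"
    by (auto simp: carrier_sum_group carrier_integer_mod_group PiE_iff)
  then have "?E \<in> generate ?S {a}"
    unfolding gen summand_def by auto
  moreover have a_carrier: "a \<in> carrier ?S"
    using a by (simp add: summand_def)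
  ultimately obtain k :: int where "?E = a [^]\<^bsub>?S\<^esub> k"
    using group.generate_pow[of ?S a] by auto
  then have "?E i = (k * a i) mod int (ls i)"
    using sum_group_pow_apply(2)[OF _ a_carrier, of i k] \<open>i < m\<close>
    by (simp add: int_pow_integer_mod_group)
  then have "[a i * k = 1] (mod int (ls i))"
    using \<open>i < m\<close> by (simp add: cong_def mult.commute)
  then show ?thesis ..
qed

context
  fixes m q :: nat and ls :: "nat \<Rightarrow> nat" and \<phi> :: "int \<Rightarrow> nat \<Rightarrow> int"
  assumes q_ge_2: "q \<ge> 2"
    and ls_pos: "\<And>i. i < m \<Longrightarrow> ls i \<ge> 1"
    and iso: "\<phi> \<in> iso (integer_mod_group q) (sum_group {..<m} (\<lambda>i. integer_mod_group (ls i)))"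
begin

private abbreviation "S \<equiv> sum_group {..<m} (\<lambda>i. integer_mod_group (ls i))"

private lemma hom: "\<phi> \<in> hom (integer_mod_group q) S"
  using iso by (simp add: iso_def)

private lemma one_in_carrier: "(1 :: int) \<in> carrier (integer_mod_group q)"
  using q_ge_2 by simp

lemma int_mod_iso_apply_pow: "i < m \<Longrightarrow> \<phi> (int n mod int q) i = (int n * \<phi> 1 i) mod int (ls i)"
proof -
  assume i: "i < m"
  have "\<phi> (1 [^]\<^bsub>integer_mod_group q\<^esub> n) = \<phi> 1 [^]\<^bsub>S\<^esub> n"
    using hom_nat_pow[OF hom one_in_carrier] by simp
  moreover have "\<phi> 1 \<in> carrier S"
    using hom one_in_carrier by (auto simp: hom_def)
  ultimately show ?thesis
    using sum_group_pow_apply(1)[of "{..<m}" "\<lambda>i. integer_mod_group (ls i)" "\<phi> 1" i n] i by simp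
qed

lemma int_mod_iso_apply: "x \<in> {0..<int q} \<Longrightarrow> i < m \<Longrightarrow> \<phi> x i = (x * \<phi> 1 i) mod int (ls i)"
  using int_mod_iso_apply_pow[of i "nat x"] by simp

lemma int_mod_iso_dvd_q_mult: "i < m \<Longrightarrow> int (ls i) dvd int q * \<phi> 1 i"
  using int_mod_iso_apply_pow[of i q] hom_one[OF hom] by (simp add: dvd_eq_mod_eq_0)

lemma int_mod_iso_apply_mod: "i < m \<Longrightarrow> \<phi> (x mod int q) i = (x * \<phi> 1 i) mod int (ls i)"
proof -
  assume i: "i < m"
  have "(x mod int q) * \<phi> 1 i = x * \<phi> 1 i - (x div int q) * (int q * \<phi> 1 i)"
    by (simp add: minus_div_mult_eq_mod[symmetric] algebra_simps)
  then have "[(x mod int q) * \<phi> 1 i = x * \<phi> 1 i] (mod int (ls i))"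
    using int_mod_iso_dvd_q_mult[OF i] by (simp add: cong_iff_dvd_diff)
  then show ?thesis
    using int_mod_iso_apply[of "x mod int q" i] i q_ge_2 by (simp add: cong_def)
qed

private lemma carrier_S: "carrier S = (\<Pi>\<^sub>E i\<in>{..<m}. {0..<int (ls i)})"
  by (rule carrier_sum_integer_mod_group) (use ls_pos in auto)

lemma int_mod_iso_kernel: "int q dvd x \<longleftrightarrow> (\<forall>i<m. [x * \<phi> 1 i = 0] (mod int (ls i)))"
proof
  have phi0: "\<phi> 0 = (\<lambda>i\<in>{..<m}. 0)"
    using hom_one[OF hom] by simp
  show "\<forall>i<m. [x * \<phi> 1 i = 0] (mod int (ls i))" if "int q dvd x"
  proof (intro allI impI)
    fix i assume "i < m"
    then have "(x * \<phi> 1 i) mod int (ls i) = \<phi> 0 i"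
      using int_mod_iso_apply_mod[of i x] that by simp
    then show "[x * \<phi> 1 i = 0] (mod int (ls i))"
      using \<open>i < m\<close> by (simp add: phi0 cong_def)
  qed
  assume x: "\<forall>i<m. [x * \<phi> 1 i = 0] (mod int (ls i))"
  have xq: "x mod int q \<in> carrier (integer_mod_group q)"
    using q_ge_2 by (simp add: carrier_integer_mod_group)
  have "\<phi> (x mod int q) \<in> carrier S"
    using hom xq by (auto simp: hom_def)
  then have "\<phi> (x mod int q) = \<phi> 0"
    unfolding phi0 carrier_S
    by (rule PiE_ext) (use x int_mod_iso_apply_mod ls_pos in \<open>auto simp: cong_def Suc_le_eq\<close>)
  then have "x mod int q = 0"
    using iso xq by (auto simp: iso_def bij_betw_def inj_on_def)
  then show "int q dvd x" by (simp add: dvd_eq_mod_eq_0)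
qed

lemma int_mod_iso_surj: "\<exists>x. \<forall>i<m. [x * \<phi> 1 i = y i] (mod int (ls i))"
proof -
  let ?Y = "\<lambda>i\<in>{..<m}. y i mod int (ls i)"
  have "?Y \<in> carrier S"
    unfolding carrier_S using ls_pos by (auto simp: Suc_le_eq)
  then have "?Y \<in> \<phi> ` carrier (integer_mod_group q)"
    using iso by (simp add: iso_def bij_betw_def)
  then obtain x where "x \<in> carrier (integer_mod_group q)" and "\<phi> x = ?Y"
    by auto
  then have "\<forall>i<m. [x * \<phi> 1 i = y i] (mod int (ls i))"
    using int_mod_iso_apply_mod[of _ x] q_ge_2 by (auto simp: cong_def carrier_integer_mod_group)
  then show ?thesis ..
qed

lemma int_mod_iso_dvd_q: "i < m \<Longrightarrow> ls i dvd q"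
proof -
  assume i: "i < m"
  obtain x where "[x * \<phi> 1 i = 1] (mod int (ls i))"
    using int_mod_iso_surj[of "\<lambda>_. 1"] i by blast
  then have "[int q * (x * \<phi> 1 i) = int q] (mod int (ls i))"
    using cong_scalar_left by fastforce
  moreover have "int (ls i) dvd int q * (x * \<phi> 1 i)"
    using int_mod_iso_dvd_q_mult[OF i] by (simp add: mult.left_commute)
  ultimately show "ls i dvd q"
    by (metis cong_dvd_iff of_nat_dvd_iff)
qed

end

lemma cyclic_decomposition_of_iso:
  fixes \<phi> :: "int \<Rightarrow> nat \<Rightarrow> int"
  assumes q: "q \<ge> 2" and ls: "\<And>i. i < m \<Longrightarrow> ls i \<ge> 1"
    and iso: "\<phi> \<in> iso (integer_mod_group q) (sum_group {..<m} (\<lambda>i. integer_mod_group (ls i)))"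
    and gen: "\<forall>i<m. \<phi> (p i) \<in> summand m ls i
      \<and> generate (sum_group {..<m} (\<lambda>j. integer_mod_group (ls j))) {\<phi> (p i)} = summand m ls i"
    and p: "\<forall>i<m. 1 \<le> p i \<and> p i \<le> int q - 1"
  shows "\<exists>w. cyclic_decomposition m q ls p w"
proof -
  define c where "c i = \<phi> 1 i" for i
  define u where "u i = \<phi> (p i) i" for i
  have "\<forall>i<m. \<exists>v. [u i * v = 1] (mod int (ls i))"
    using gen summand_generator_unit by (auto simp: u_def)
  then obtain v where v: "\<And>i. i < m \<Longrightarrow> [v i * u i = 1] (mod int (ls i))"
    by (metis mult.commute)
  define w where "w i = (c i * v i) mod int (ls i)" for i
  have w: "[x * w i = y] (mod int (ls i)) \<longleftrightarrow> [x * c i = y * u i] (mod int (ls i))"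
    if "i < m" for x y i
  proof -
    have "[x * w i = x * c i * v i] (mod int (ls i))"
      by (simp add: w_def cong_def mod_mult_right_eq mult.assoc)
    then show ?thesis
      using cong_mult_unit_iff[OF v[OF that], of "x * c i" y] by (metis cong_sym cong_trans)
  qed
  have image_p: "[p j * c i = (if i = j then 1 else 0) * u i] (mod int (ls i))"
    if "i < m" "j < m" for i j
  proof -
    have "\<phi> (p j) i = (p j * c i) mod int (ls i)"
      using int_mod_iso_apply[OF q ls iso, of "p j" i] p[rule_format, OF that(2)] that(1) by (simp add: c_def)
    moreover have "i \<noteq> j \<Longrightarrow> \<phi> (p j) i = 0"
      using gen that by (auto simp: summand_def)
    ultimately show ?thesis
      by (auto simp: u_def cong_def)
  qed
  have "cyclic_decomposition m q ls p w"
  proof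
    show "q \<ge> 1" using q by simp
    show "i < m \<Longrightarrow> ls i \<ge> 1" "i < m \<Longrightarrow> ls i dvd q" for i
      using ls int_mod_iso_dvd_q[OF q ls iso] by auto
    show "i < m \<Longrightarrow> 0 \<le> w i \<and> w i < int (ls i)" for i
      using ls[of i] by (simp add: w_def)
    show "\<forall>i<m. [x * w i = 0] (mod int (ls i)) \<Longrightarrow> int q dvd x" for x
      using int_mod_iso_kernel[OF q ls iso] w by (simp add: c_def)
    show "\<exists>x. \<forall>i<m. [x * w i = y i] (mod int (ls i))" for y
      using int_mod_iso_surj[OF q ls iso, of "\<lambda>i. y i * u i"] w by (simp add: c_def)
    show "i < m \<Longrightarrow> j < m \<Longrightarrow> [p j * w i = (if i = j then 1 else 0)] (mod int (ls i))" for i j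
      using w image_p by blast
  qed
  then show ?thesis by blast
qed

theorem lemmaA5:
  fixes m :: nat and K :: real
  assumes "m \<ge> 1" and "0 < K"
  shows "\<exists>C A. C \<ge> 1 \<and> A \<ge> 0 \<and>
    (\<forall>(\<alpha> :: nat \<Rightarrow> real) (q :: nat) (l :: real) (p :: nat \<Rightarrow> int) (ls :: nat \<Rightarrow> nat).
       (\<forall>i<m. 0 < \<alpha> i \<and> \<alpha> i < 1) \<longrightarrow>
       q \<ge> 1 \<longrightarrow> l \<ge> 1 \<longrightarrow> real q \<le> l \<longrightarrow>
       (\<forall>i<m. 1 \<le> p i \<and> p i \<le> int q - 1 \<and> \<bar>real q * \<alpha> i - real_of_int (p i)\<bar> < K / l) \<longrightarrow>
       (\<forall>i<m. ls i \<ge> 1) \<longrightarrow>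
       (\<exists>\<phi>. \<phi> \<in> iso (integer_mod_group q) (sum_group {..<m} (\<lambda>i. integer_mod_group (ls i))) \<and>
            (\<forall>i<m. \<phi> (p i) \<in> summand m ls i \<and>
                   generate (sum_group {..<m} (\<lambda>j. integer_mod_group (ls j))) {\<phi> (p i)}
                     = summand m ls i)) \<longrightarrow>
       (\<exists>f. quasi_isometry C A T1 (warped_level_dist m \<alpha> (real q * l))
              (prod_carrier m) (l1_prod_dist m l ls) f))"
proof (rule exI[of _ "2 * real (Suc m) * (K + 1)"], rule exI[of _ "real m"], intro conjI allI impI)
  show "1 \<le> 2 * real (Suc m) * (K + 1)"
    using assms(2) mult_mono[of 1 "2 * real (Suc m)" 1 "K + 1"] by simp
  show "0 \<le> real m" by simp
  fix \<alpha> :: "nat \<Rightarrow> real" and q :: nat and l :: real and p :: "nat \<Rightarrow> int" and ls :: "nat \<Rightarrow> nat"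
  assume "real q \<le> l"
    and p: "\<forall>i<m. 1 \<le> p i \<and> p i \<le> int q - 1 \<and> \<bar>real q * \<alpha> i - real_of_int (p i)\<bar> < K / l"
    and "\<forall>i<m. ls i \<ge> 1"
    and "\<exists>\<phi>. \<phi> \<in> iso (integer_mod_group q) (sum_group {..<m} (\<lambda>i. integer_mod_group (ls i))) \<and>
      (\<forall>i<m. \<phi> (p i) \<in> summand m ls i \<and>
        generate (sum_group {..<m} (\<lambda>j. integer_mod_group (ls j))) {\<phi> (p i)} = summand m ls i)"
  moreover have "q \<ge> 2"
    using p assms(1) by force
  ultimately obtain w where w: "cyclic_decomposition m q ls p w"
    using cyclic_decomposition_of_iso by blast
  interpret warped_level_data m q ls p w l K \<alpha>
    using \<open>real q \<le> l\<close> assms(2) p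
    by (intro warped_level_data.intro[OF w] warped_level_data_axioms.intro) auto
  show "\<exists>f. quasi_isometry (2 * real (Suc m) * (K + 1)) (real m) T1 (warped_level_dist m \<alpha> (real q * l))
      (prod_carrier m) (l1_prod_dist m l ls) f"
    using quasi_isometry_embed by blast
qed

end
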